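(* Every weakly Rayleigh set-system $\mathcal{Q}\subseteq 2^E$ ($E$ finite) is convex.
   Context: For $\omega:2^E\to[0,\infty)$ not identically zero, $Z(\omega;\mathbf{y})=\sum_S\omega(S)\prod_{e\in S}y_e$; with subscripts denoting partial derivatives, $Z$ is Rayleigh if $Z_eZ_f-Z_{ef}Z\ge0$ for all distinct $e,f$ and all positive $\mathbf{y}$. $\mathcal{Q}$ is weakly Rayleigh if some $\omega\ge0$ with $\{S:\omega(S)>0\}=\mathcal{Q}$ has $Z(\omega;\mathbf{y})$ Rayleigh. $\mathcal{Q}$ is convex if $S\subseteq T\subseteq S'$ with $S,S'\in\mathcal{Q}$ implies $T\in\mathcal{Q}$. *)

theory Defs
  imports "HOL-Analysis.Analysis"
begin

definition Zpoly :: "'a set \<Rightarrow> ('a set \<Rightarrow> real) \<Rightarrow> ('a \<Rightarrow> real) \<Rightarrow> real" where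
  "Zpoly E \<omega> y = (\<Sum>S\<in>Pow E. \<omega> S * (\<Prod>e\<in>S. y e))"

definition pderiv1 :: "(('a \<Rightarrow> real) \<Rightarrow> real) \<Rightarrow> 'a \<Rightarrow> ('a \<Rightarrow> real) \<Rightarrow> real" where
  "pderiv1 F e y = deriv (\<lambda>t. F (y(e := t))) (y e)"

definition rayleigh :: "'a set \<Rightarrow> ('a set \<Rightarrow> real) \<Rightarrow> bool" where
  "rayleigh E \<omega> \<longleftrightarrow>
     (\<forall>e\<in>E. \<forall>f\<in>E. e \<noteq> f \<longrightarrow>
       (\<forall>y. (\<forall>x\<in>E. y x > 0) \<longrightarrow>
          pderiv1 (Zpoly E \<omega>) e y * pderiv1 (Zpoly E \<omega>) f y
          - pderiv1 (pderiv1 (Zpoly E \<omega>) f) e y * Zpoly E \<omega> y \<ge> 0))"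

text \<open>Q subset of 2^E is weakly Rayleigh: some omega : 2^E -> [0,inf) with support exactly Q
  has Rayleigh generating polynomial. (omega not identically zero is implicit when Q nonempty;
  we require it explicitly.)\<close>
definition weakly_rayleigh :: "'a set \<Rightarrow> 'a set set \<Rightarrow> bool" where
  "weakly_rayleigh E Q \<longleftrightarrow>
     (\<exists>\<omega>. (\<forall>S. \<omega> S \<ge> 0) \<and> (\<exists>S\<in>Pow E. \<omega> S \<noteq> 0) \<and>
          {S\<in>Pow E. \<omega> S > 0} = Q \<and> rayleigh E \<omega>)"

definition convex_setsys :: "'a set set \<Rightarrow> bool" where
  "convex_setsys Q \<longleftrightarrow> (\<forall>S T S'. S \<in> Q \<longrightarrow> S' \<in> Q \<longrightarrow> S \<subseteq> T \<longrightarrow> T \<subseteq> S' \<longrightarrow> T \<in> Q)"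

end

theory Submission
  imports Defs
begin

(* Let S \<subseteq> S' be support sets of a Rayleigh weight \<omega> and e \<noteq> f elements of S' - S.
  Evaluate Z at the point y that is N on S, 1 on S' - S and 1/N outside S'.  Split Z into the
  parts Z(neither), Z(e only), Z(f only), Z(both) according to which of e, f a set contains.
  As y_e = y_f = 1, the Rayleigh inequality Z_e Z_f \<ge> Z_ef Z becomes
  Z(neither) Z(both) \<le> Z(e only) Z(f only).  The monomials of S and S' alone give the left side
  at least \<omega>(S) \<omega>(S') N^(2|S|).  If no support set between S and S' contained e but not f,
  every monomial of Z(e only) would be at most N^(|S|-1), and the right side at most
  W\<^sup>2 N^(2|S|-1) with W the total weight, which fails for large N.  So such an exchange set A
  exists, and exchange gives convexity by induction on |S' - S|: the interval [S, A] puts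
  insert e S into the support, and [insert e S, S'] is shorter. *)

lemma prod_fun_upd_split:
  fixes y :: "'a \<Rightarrow> real"
  assumes "finite S"
  shows "(\<Prod>x\<in>S. (y(e := t)) x) = (if e \<in> S then t * (\<Prod>x\<in>S. (y(e := 1)) x) else \<Prod>x\<in>S. y x)"
proof (cases "e \<in> S")
  case True
  have "(\<Prod>x\<in>S - {e}. (y(e := t)) x) = (\<Prod>x\<in>S - {e}. (y(e := 1)) x)"
    by (rule prod.cong) auto
  with True assms show ?thesis by (simp add: prod.remove)
next
  case False
  then have "(\<Prod>x\<in>S. (y(e := t)) x) = (\<Prod>x\<in>S. y x)"
    by (intro prod.cong) auto
  with False show ?thesis by simp
qed

lemma Zpoly_fun_upd:
  assumes "finite E"
  shows "Zpoly E \<omega> (y(e := t)) =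
    Zpoly E (\<lambda>S. if e \<in> S then 0 else \<omega> S) y + t * Zpoly E (\<lambda>S. if e \<in> S then \<omega> S else 0) (y(e := 1))"
  unfolding Zpoly_def sum_distrib_left sum.distrib[symmetric]
proof (rule sum.cong)
  fix S assume "S \<in> Pow E"
  then have "finite S" using assms finite_subset by blast
  then show "\<omega> S * (\<Prod>x\<in>S. (y(e := t)) x) =
    (if e \<in> S then 0 else \<omega> S) * (\<Prod>x\<in>S. y x) + t * ((if e \<in> S then \<omega> S else 0) * (\<Prod>x\<in>S. (y(e := 1)) x))"
    by (subst prod_fun_upd_split) simp_all
qed simp

lemma pderiv1_Zpoly:
  assumes "finite E"
  shows "pderiv1 (Zpoly E \<omega>) e y = Zpoly E (\<lambda>S. if e \<in> S then \<omega> S else 0) (y(e := 1))"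
proof -
  have affine: "(\<lambda>t. Zpoly E \<omega> (y(e := t))) = (\<lambda>t. Zpoly E (\<lambda>S. if e \<in> S then 0 else \<omega> S) y
      + t * Zpoly E (\<lambda>S. if e \<in> S then \<omega> S else 0) (y(e := 1)))"
    by (rule ext) (rule Zpoly_fun_upd[OF assms])
  show ?thesis
    unfolding pderiv1_def affine by (rule DERIV_imp_deriv) (auto intro!: derivative_eq_intros)
qed

lemma pderiv1_pderiv1_Zpoly:
  assumes "finite E" "e \<noteq> f"
  shows "pderiv1 (pderiv1 (Zpoly E \<omega>) f) e y =
    Zpoly E (\<lambda>S. if e \<in> S \<and> f \<in> S then \<omega> S else 0) (y(e := 1, f := 1))"
proof -
  have "pderiv1 (Zpoly E \<omega>) f = (\<lambda>z. Zpoly E (\<lambda>S. if f \<in> S then \<omega> S else 0) (z(f := 1)))"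
    using assms(1) by (simp add: pderiv1_Zpoly fun_eq_iff)
  then have "pderiv1 (pderiv1 (Zpoly E \<omega>) f) e y = pderiv1 (Zpoly E (\<lambda>S. if f \<in> S then \<omega> S else 0)) e (y(f := 1))"
    using assms(2) by (simp add: pderiv1_def fun_upd_twist)
  also have "\<dots> = Zpoly E (\<lambda>S. if e \<in> S \<and> f \<in> S then \<omega> S else 0) (y(e := 1, f := 1))"
    using assms by (simp add: pderiv1_Zpoly fun_upd_twist conj_commute if_if_eq_conj)
  finally show ?thesis .
qed

definition test_point :: "real \<Rightarrow> 'a set \<Rightarrow> 'a set \<Rightarrow> 'a \<Rightarrow> real" where
  "test_point N S S' x = (if x \<in> S then N else if x \<in> S' then 1 else 1 / N)"

lemma prod_test_point:
  assumes "S \<subseteq> S'" "finite A"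
  shows "(\<Prod>x\<in>A. test_point N S S' x) = N ^ card (A \<inter> S) * (1 / N) ^ card (A - S')"
proof -
  let ?y = "test_point N S S'"
  have "prod ?y A = prod ?y (A \<inter> S) * (prod ?y ((A - S) \<inter> S') * prod ?y (A - S - S'))"
    using assms(2) by (simp add: prod.Int_Diff[symmetric])
  also have "A - S - S' = A - S'" using assms(1) by blast
  also have "prod ?y (A \<inter> S) = N ^ card (A \<inter> S)"
    by (simp add: test_point_def)
  also have "prod ?y ((A - S) \<inter> S') = 1"
    by (simp add: test_point_def)
  also have "prod ?y (A - S') = (\<Prod>x\<in>A - S'. 1 / N)"
    using assms(1) by (intro prod.cong) (auto simp: test_point_def)
  finally show ?thesis by simp
qed

lemma prod_test_point_le:
  assumes "S \<subseteq> S'" "finite A" "finite S" "1 \<le> N"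
  shows "(\<Prod>x\<in>A. test_point N S S' x) \<le> N ^ card S"
proof -
  have "N ^ card (A \<inter> S) * (1 / N) ^ card (A - S') \<le> N ^ card S * 1"
    using assms by (intro mult_mono power_increasing card_mono power_le_one) auto
  then show ?thesis using prod_test_point[OF assms(1,2)] by simp
qed

lemma prod_test_point_outside_le:
  assumes "S \<subseteq> S'" "finite A" "finite S" "1 \<le> N" "\<not> (S \<subseteq> A \<and> A \<subseteq> S')"
  shows "N * (\<Prod>x\<in>A. test_point N S S' x) \<le> N ^ card S"
proof (cases "S \<subseteq> A")
  case True
  then have "A - S' \<noteq> {}" using assms(5) by blast
  then have "1 \<le> card (A - S')" using assms(2) by (simp add: Suc_leI card_gt_0_iff)
  then have "N * (1 / N) ^ card (A - S') \<le> N * (1 / N) ^ 1"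
    using assms(4) by (intro mult_left_mono power_decreasing) auto
  moreover have "N ^ card (A \<inter> S) \<le> N ^ card S"
    using assms by (intro power_increasing card_mono) auto
  ultimately have "N ^ card (A \<inter> S) * (N * (1 / N) ^ card (A - S')) \<le> N ^ card S * 1"
    using assms(4) by (intro mult_mono) auto
  then show ?thesis using prod_test_point[OF assms(1,2)] by (simp add: algebra_simps)
next
  case False
  then have "card (A \<inter> S) < card S" using assms(3) by (intro psubset_card_mono) auto
  then have "N ^ Suc (card (A \<inter> S)) \<le> N ^ card S"
    using assms(4) by (intro power_increasing) auto
  then have "N * N ^ card (A \<inter> S) \<le> N ^ card S" by simp
  moreover have "(1 / N) ^ card (A - S') \<le> 1" using assms(4) by (intro power_le_one) auto
  ultimately have "N * N ^ card (A \<inter> S) * (1 / N) ^ card (A - S') \<le> N ^ card S * 1"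
    using assms(4) by (intro mult_mono) auto
  then show ?thesis using prod_test_point[OF assms(1,2)] by (simp add: algebra_simps)
qed

lemma prod_test_point_between:
  assumes "S \<subseteq> A" "A \<subseteq> S'" "finite S'"
  shows "(\<Prod>x\<in>A. test_point N S S' x) = N ^ card S"
  using assms finite_subset[OF assms(2,3)]
  by (simp add: prod_test_point Int_absorb1 Diff_eq_empty_iff[THEN iffD2])

lemma Zpoly_nonneg:
  assumes "\<forall>A. 0 \<le> \<omega> A" "\<forall>x\<in>E. 0 \<le> y x"
  shows "0 \<le> Zpoly E \<omega> y"
  unfolding Zpoly_def using assms
  by (intro sum_nonneg mult_nonneg_nonneg prod_nonneg) auto

lemma Zpoly_restrict_ge:
  assumes "finite E" "\<forall>A. 0 \<le> \<omega> A" "\<forall>x\<in>E. 0 \<le> y x" "S \<subseteq> E" "R S"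
  shows "\<omega> S * (\<Prod>x\<in>S. y x) \<le> Zpoly E (\<lambda>A. if R A then \<omega> A else 0) y"
proof -
  have "\<omega> S * (\<Prod>x\<in>S. y x) = (if R S then \<omega> S else 0) * (\<Prod>x\<in>S. y x)"
    using assms(5) by simp
  also have "\<dots> \<le> Zpoly E (\<lambda>A. if R A then \<omega> A else 0) y"
    unfolding Zpoly_def using assms(1-4)
    by (intro member_le_sum mult_nonneg_nonneg prod_nonneg) auto
  finally show ?thesis .
qed

lemma Zpoly_restrict_le:
  assumes "\<forall>A. 0 \<le> \<omega> A" "0 \<le> B" "\<forall>A\<in>Pow E. R A \<longrightarrow> 0 < \<omega> A \<longrightarrow> (\<Prod>x\<in>A. y x) \<le> B"
  shows "Zpoly E (\<lambda>A. if R A then \<omega> A else 0) y \<le> (\<Sum>A\<in>Pow E. \<omega> A) * B"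
  unfolding Zpoly_def sum_distrib_right
proof (rule sum_mono)
  fix A assume "A \<in> Pow E"
  then show "(if R A then \<omega> A else 0) * (\<Prod>x\<in>A. y x) \<le> \<omega> A * B"
    using assms by (cases "R A \<and> 0 < \<omega> A") (auto simp: less_le intro: mult_left_mono)
qed

lemma rayleigh_cross_le:
  assumes "finite E" "rayleigh E \<omega>" "e \<in> E" "f \<in> E" "e \<noteq> f" "\<forall>x\<in>E. 0 < y x" "y e = 1" "y f = 1"
  shows "Zpoly E (\<lambda>S. if e \<notin> S \<and> f \<notin> S then \<omega> S else 0) y
         * Zpoly E (\<lambda>S. if e \<in> S \<and> f \<in> S then \<omega> S else 0) y
    \<le> Zpoly E (\<lambda>S. if e \<in> S \<and> f \<notin> S then \<omega> S else 0) y
         * Zpoly E (\<lambda>S. if e \<notin> S \<and> f \<in> S then \<omega> S else 0) y"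
    (is "?a * ?d \<le> ?b * ?c")
proof -
  have upd: "y(e := 1) = y" "y(f := 1) = y" "y(e := 1, f := 1) = y"
    using assms(7,8) by auto
  have Z: "Zpoly E \<omega> y = ?a + ?b + ?c + ?d"
    unfolding Zpoly_def sum.distrib[symmetric]
    by (rule sum.cong[OF refl]) simp
  have Ze: "pderiv1 (Zpoly E \<omega>) e y = ?b + ?d"
    unfolding pderiv1_Zpoly[OF assms(1)] upd Zpoly_def sum.distrib[symmetric]
    by (rule sum.cong[OF refl]) simp
  have Zf: "pderiv1 (Zpoly E \<omega>) f y = ?c + ?d"
    unfolding pderiv1_Zpoly[OF assms(1)] upd Zpoly_def sum.distrib[symmetric]
    by (rule sum.cong[OF refl]) simp
  have Zef: "pderiv1 (pderiv1 (Zpoly E \<omega>) f) e y = ?d"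
    unfolding pderiv1_pderiv1_Zpoly[OF assms(1,5)] upd ..
  have "0 \<le> pderiv1 (Zpoly E \<omega>) e y * pderiv1 (Zpoly E \<omega>) f y
      - pderiv1 (pderiv1 (Zpoly E \<omega>) f) e y * Zpoly E \<omega> y"
    using assms(2-6) unfolding rayleigh_def by blast
  then have "0 \<le> (?b + ?d) * (?c + ?d) - ?d * (?a + ?b + ?c + ?d)"
    unfolding Zef Ze Zf Z .
  then show ?thesis by (simp add: algebra_simps)
qed

lemma rayleigh_test_point_bound:
  assumes "finite E" "\<forall>A. 0 \<le> \<omega> A" "rayleigh E \<omega>" "S \<subseteq> S'" "S' \<subseteq> E"
    and "e \<in> S' - S" "f \<in> S' - S" "e \<noteq> f" "1 \<le> N"
    and no_exchange: "\<forall>A\<subseteq>E. 0 < \<omega> A \<longrightarrow> S \<subseteq> A \<longrightarrow> A \<subseteq> S' \<longrightarrow> e \<in> A \<longrightarrow> f \<in> A"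
  shows "N * (\<omega> S * \<omega> S') \<le> (\<Sum>A\<in>Pow E. \<omega> A)\<^sup>2"
proof -
  define y where "y = test_point N S S'"
  define P where "P = N ^ card S"
  define W where "W = (\<Sum>A\<in>Pow E. \<omega> A)"
  define Z where "Z R = Zpoly E (\<lambda>A. if R A then \<omega> A else 0) y" for R
  have fin: "finite S'" "finite S" "\<And>A. A \<in> Pow E \<Longrightarrow> finite A"
    using assms(1,4,5) by (auto intro: finite_subset)
  have y_pos: "\<forall>x\<in>E. 0 < y x" and y_ef: "y e = 1" "y f = 1"
    using assms(6,7,9) by (auto simp: y_def test_point_def)
  then have y_nonneg: "\<forall>x\<in>E. 0 \<le> y x" by (auto intro: less_imp_le)
  have P_pos: "0 < P" using assms(9) by (simp add: P_def)
  have W_nonneg: "0 \<le> W" unfolding W_def using assms(2) by (simp add: sum_nonneg)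
  have Z_nonneg: "0 \<le> Z R" for R
    unfolding Z_def using assms(2) y_nonneg by (intro Zpoly_nonneg) auto
  have "\<omega> S * P \<le> Z (\<lambda>A. e \<notin> A \<and> f \<notin> A)"
    using Zpoly_restrict_ge[OF assms(1,2) y_nonneg, of S] prod_test_point_between[of S S S' N]
      assms(4-7) fin by (simp add: Z_def y_def P_def)
  moreover have "\<omega> S' * P \<le> Z (\<lambda>A. e \<in> A \<and> f \<in> A)"
    using Zpoly_restrict_ge[OF assms(1,2) y_nonneg, of S'] prod_test_point_between[of S S' S' N]
      assms(4-7) fin by (simp add: Z_def y_def P_def)
  ultimately have "(\<omega> S * P) * (\<omega> S' * P) \<le> Z (\<lambda>A. e \<notin> A \<and> f \<notin> A) * Z (\<lambda>A. e \<in> A \<and> f \<in> A)"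
    using assms(2) P_pos Z_nonneg by (intro mult_mono) auto
  also have "\<dots> \<le> Z (\<lambda>A. e \<in> A \<and> f \<notin> A) * Z (\<lambda>A. e \<notin> A \<and> f \<in> A)"
    unfolding Z_def using assms y_pos y_ef by (intro rayleigh_cross_le) auto
  also have "\<dots> \<le> (W * (P / N)) * (W * P)"
  proof (rule mult_mono)
    show "Z (\<lambda>A. e \<in> A \<and> f \<notin> A) \<le> W * (P / N)"
      unfolding Z_def W_def
    proof (intro Zpoly_restrict_le ballI impI)
      fix A assume "A \<in> Pow E" "e \<in> A \<and> f \<notin> A" "0 < \<omega> A"
      with no_exchange have "\<not> (S \<subseteq> A \<and> A \<subseteq> S')" by blast
      then have "N * prod y A \<le> P"
        unfolding y_def P_def using prod_test_point_outside_le assms(4,9) fin \<open>A \<in> Pow E\<close> by blast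
      then show "prod y A \<le> P / N" using assms(9) by (simp add: field_simps)
    qed (use assms(2,9) P_pos in auto)
    show "Z (\<lambda>A. e \<notin> A \<and> f \<in> A) \<le> W * P"
      unfolding Z_def W_def using assms(2,4,9) P_pos fin
      by (intro Zpoly_restrict_le) (auto simp: y_def P_def intro: prod_test_point_le)
  qed (use W_nonneg P_pos Z_nonneg assms(9) in auto)
  also have "\<dots> = W\<^sup>2 * (P * P) / N"
    by (simp add: power2_eq_square)
  finally have "(N * (\<omega> S * \<omega> S')) * (P * P) \<le> W\<^sup>2 * (P * P)"
    using assms(9) by (simp add: field_simps)
  then show ?thesis
    using P_pos by (simp add: W_def)
qed

lemma rayleigh_support_exchange:
  assumes "finite E" "\<forall>A. 0 \<le> \<omega> A" "rayleigh E \<omega>" "S \<subseteq> S'" "S' \<subseteq> E"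
    and "0 < \<omega> S" "0 < \<omega> S'" "e \<in> S' - S" "f \<in> S' - S" "e \<noteq> f"
  shows "\<exists>A\<subseteq>E. 0 < \<omega> A \<and> S \<subseteq> A \<and> A \<subseteq> S' \<and> e \<in> A \<and> f \<notin> A"
proof (rule ccontr)
  assume "\<not> ?thesis"
  then have no_exchange: "\<forall>A\<subseteq>E. 0 < \<omega> A \<longrightarrow> S \<subseteq> A \<longrightarrow> A \<subseteq> S' \<longrightarrow> e \<in> A \<longrightarrow> f \<in> A"
    by blast
  define W where "W = (\<Sum>A\<in>Pow E. \<omega> A)"
  define p where "p = \<omega> S * \<omega> S'"
  define N where "N = W\<^sup>2 / p + 1"
  have p_pos: "0 < p" unfolding p_def using assms(6,7) by simp
  then have "1 \<le> N" by (simp add: N_def)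
  then have "N * p \<le> W\<^sup>2"
    unfolding W_def p_def using assms no_exchange by (intro rayleigh_test_point_bound) auto
  moreover have "N * p = W\<^sup>2 + p"
    using p_pos by (simp add: N_def distrib_right)
  ultimately show False using p_pos by simp
qed

lemma convex_setsys_if_exchange:
  assumes finite_members: "\<forall>S\<in>Q. finite S"
    and exchange: "\<And>S S' e f. S \<in> Q \<Longrightarrow> S' \<in> Q \<Longrightarrow> S \<subseteq> S' \<Longrightarrow> e \<in> S' - S \<Longrightarrow> f \<in> S' - S \<Longrightarrow> e \<noteq> f
      \<Longrightarrow> \<exists>A\<in>Q. S \<subseteq> A \<and> A \<subseteq> S' \<and> e \<in> A \<and> f \<notin> A"
  shows "convex_setsys Q"
proof -
  have "T \<in> Q" if "S \<in> Q" "S' \<in> Q" "S \<subseteq> T" "T \<subseteq> S'" for S T S'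
    using that
  proof (induction "card (S' - S)" arbitrary: S T S' rule: less_induct)
    case less
    show ?case
    proof (rule ccontr)
      assume "T \<notin> Q"
      with less.prems have "T \<noteq> S" "T \<noteq> S'" by auto
      with less.prems(3,4) obtain e f where e: "e \<in> T - S" and f: "f \<in> S' - T"
        by blast
      have fin: "finite (S' - S)" using finite_members less.prems(2) by blast
      obtain A where A: "A \<in> Q" "S \<subseteq> A" "A \<subseteq> S'" "e \<in> A" "f \<notin> A"
        using exchange[of S S' e f] less.prems e f by blast
      have "card (A - S) < card (S' - S)"
        using fin A f less.prems(3,4) by (intro psubset_card_mono) auto
      then have eS: "insert e S \<in> Q"
        using less.hyps[of A S "insert e S"] A less.prems(1) e by blast
      have "card (S' - insert e S) < card (S' - S)"
        using fin e less.prems(4) by (intro psubset_card_mono) auto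
      then show False
        using less.hyps[of "S'" "insert e S" T] eS less.prems e \<open>T \<notin> Q\<close> by blast
    qed
  qed
  then show ?thesis unfolding convex_setsys_def by blast
qed

theorem corollary4p3:
  fixes E :: "'a set" and Q :: "'a set set"
  assumes "finite E" and "Q \<subseteq> Pow E" and "weakly_rayleigh E Q"
  shows "convex_setsys Q"
proof -
  obtain \<omega> where nonneg: "\<forall>A. 0 \<le> \<omega> A" and support: "{A\<in>Pow E. 0 < \<omega> A} = Q"
    and rayleigh: "rayleigh E \<omega>"
    using assms(3) unfolding weakly_rayleigh_def by blast
  show ?thesis
  proof (rule convex_setsys_if_exchange)
    show "\<forall>S\<in>Q. finite S" using assms(1,2) finite_subset by blast
  next
    fix S S' e f
    assume "S \<in> Q" "S' \<in> Q" "S \<subseteq> S'" "e \<in> S' - S" "f \<in> S' - S" "e \<noteq> f"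
    with support have "\<exists>A\<subseteq>E. 0 < \<omega> A \<and> S \<subseteq> A \<and> A \<subseteq> S' \<and> e \<in> A \<and> f \<notin> A"
      using assms(1) nonneg rayleigh by (intro rayleigh_support_exchange) auto
    with support show "\<exists>A\<in>Q. S \<subseteq> A \<and> A \<subseteq> S' \<and> e \<in> A \<and> f \<notin> A" by blast
  qed
qed

end
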